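(* Let $\{g_k\}_{k\ge1}\subset\mathbb{R}^{+}\cup\{0\}$ be arbitrary, and for $n=1,2,\dots$ define $\Gamma_{(n)}:\mathcal{O}\to\mathcal{O}$ by $$\Gamma_{(n)}\varphi(x)=\frac{\varphi(x)\exp\!\left(x\sum_{k=1}^{n}g_k\right)}{\sum_{y\in E_\varphi}\varphi(y)\exp\!\left(y\sum_{k=1}^{n}g_k\right)},\qquad x\in\mathbb{R}.$$ If the real sequence $\left\{\sum_{k=1}^{n}g_k\right\}_{n\ge1}$ is Cauchy, then for every $\varphi\in\mathcal{O}$ the sequence $\{\Gamma_{(n)}\varphi\}_{n\ge1}$ is a Cauchy sequence in the metric space $(\mathcal{O},d)$.
   Context: A normalized fitness distribution (NFD) is a function $\varphi:\mathbb{R}\to[0,1]$ whose support $E_\varphi=\{x:\varphi(x)\neq0\}$ is finite and which satisfies $\sum_{x\in E_\varphi}\varphi(x)=1$; $\mathcal{O}$ denotes the space of all NFDs. The metric $d$ on $\mathcal{O}$ is $d(\varphi_1,\varphi_2)=\sum_{x\in E_{\varphi_1}\cup E_{\varphi_2}}|\varphi_1(x)-\varphi_2(x)|$. *)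

theory Defs
  imports "HOL-Analysis.Analysis"
begin

definition supp :: "(real \<Rightarrow> real) \<Rightarrow> real set" where
  "supp \<phi> = {x. \<phi> x \<noteq> 0}"

definition NFD :: "(real \<Rightarrow> real) set" where
  "NFD = {\<phi>. (\<forall>x. 0 \<le> \<phi> x \<and> \<phi> x \<le> 1) \<and> finite (supp \<phi>) \<and> (\<Sum>x\<in>supp \<phi>. \<phi> x) = 1}"

definition nfd_dist :: "(real \<Rightarrow> real) \<Rightarrow> (real \<Rightarrow> real) \<Rightarrow> real" where
  "nfd_dist \<phi>1 \<phi>2 = (\<Sum>x\<in>supp \<phi>1 \<union> supp \<phi>2. \<bar>\<phi>1 x - \<phi>2 x\<bar>)"

definition Gamma :: "(nat \<Rightarrow> real) \<Rightarrow> nat \<Rightarrow> (real \<Rightarrow> real) \<Rightarrow> (real \<Rightarrow> real)" where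
  "Gamma g n \<phi> = (\<lambda>x. \<phi> x * exp (x * (\<Sum>k=1..n. g k)) /
      (\<Sum>y\<in>supp \<phi>. \<phi> y * exp (y * (\<Sum>k=1..n. g k))))"

definition nfd_Cauchy :: "(nat \<Rightarrow> (real \<Rightarrow> real)) \<Rightarrow> bool" where
  "nfd_Cauchy s \<longleftrightarrow> (\<forall>e>0. \<exists>N\<ge>1. \<forall>m\<ge>N. \<forall>n\<ge>N. nfd_dist (s m) (s n) < e)"

end

theory Submission
  imports Defs
begin

text \<open>\<open>\<Gamma>\<^sub>(\<^sub>n\<^sub>)\<phi>\<close> is the exponential tilt of \<open>\<phi>\<close> by the partial sum \<open>S\<^sub>n = g\<^sub>1 + \<dots> + g\<^sub>n\<close>.
  For fixed \<open>x\<close> the tilt depends continuously on the parameter, since its normaliser is a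
  finite sum of positive terms; so if \<open>S\<^sub>n\<close> converges, \<open>\<Gamma>\<^sub>(\<^sub>n\<^sub>)\<phi>\<close> converges pointwise.  All
  these distributions live on the finite support of \<open>\<phi>\<close>, on which \<open>d\<close> is a finite sum of
  pointwise differences, so pointwise convergence gives the Cauchy property.\<close>

definition exp_tilt :: "(real \<Rightarrow> real) \<Rightarrow> real \<Rightarrow> real \<Rightarrow> real" where
  "exp_tilt \<phi> s = (\<lambda>x. \<phi> x * exp (x * s) / (\<Sum>y\<in>supp \<phi>. \<phi> y * exp (y * s)))"

lemma Gamma_eq_exp_tilt: "Gamma g n \<phi> = exp_tilt \<phi> (\<Sum>k=1..n. g k)"
  by (simp add: Gamma_def exp_tilt_def)

lemma supp_exp_tilt_subset: "supp (exp_tilt \<phi> s) \<subseteq> supp \<phi>"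
  by (auto simp: supp_def exp_tilt_def)

lemma exp_tilt_normaliser_pos:
  assumes "\<phi> \<in> NFD"
  shows "(\<Sum>y\<in>supp \<phi>. \<phi> y * exp (y * s)) > 0"
proof -
  have fin: "finite (supp \<phi>)" and mass: "(\<Sum>x\<in>supp \<phi>. \<phi> x) = 1"
    and nonneg: "\<And>x. \<phi> x \<ge> 0"
    using assms by (auto simp: NFD_def)
  have "supp \<phi> \<noteq> {}" using mass by auto
  moreover have "\<phi> y > 0" if "y \<in> supp \<phi>" for y
    using that nonneg[of y] by (simp add: supp_def)
  ultimately show ?thesis
    using fin by (intro sum_pos) auto
qed

lemma tendsto_exp_tilt:
  assumes "\<phi> \<in> NFD" and "(f \<longlongrightarrow> s) F"
  shows "((\<lambda>t. exp_tilt \<phi> (f t) x) \<longlongrightarrow> exp_tilt \<phi> s x) F"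
  unfolding exp_tilt_def
  using exp_tilt_normaliser_pos[OF assms(1), of s]
  by (intro tendsto_intros assms(2)) auto

lemma nfd_dist_eq_sum_over_superset:
  assumes "finite A" and "supp \<phi>1 \<subseteq> A" and "supp \<phi>2 \<subseteq> A"
  shows "nfd_dist \<phi>1 \<phi>2 = (\<Sum>x\<in>A. \<bar>\<phi>1 x - \<phi>2 x\<bar>)"
  unfolding nfd_dist_def using assms
  by (intro sum.mono_neutral_left) (auto simp: supp_def)

lemma nfd_Cauchy_if_pointwise_tendsto:
  assumes "finite A" and supp_s: "\<And>n. supp (s n) \<subseteq> A"
    and lim: "\<And>x. x \<in> A \<Longrightarrow> (\<lambda>n. s n x) \<longlonglongrightarrow> \<psi> x"
  shows "nfd_Cauchy s"
  unfolding nfd_Cauchy_def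
proof (intro allI impI)
  fix e :: real assume "e > 0"
  define err where "err = (\<lambda>n. \<Sum>x\<in>A. \<bar>s n x - \<psi> x\<bar>)"
  have "err \<longlonglongrightarrow> (\<Sum>x\<in>A. \<bar>\<psi> x - \<psi> x\<bar>)"
    unfolding err_def by (intro tendsto_intros lim)
  then have "\<forall>\<^sub>F n in sequentially. err n < e/2"
    using \<open>e > 0\<close> by (intro order_tendstoD(2)) auto
  then obtain N where N: "\<And>n. n \<ge> N \<Longrightarrow> err n < e/2"
    by (auto simp: eventually_sequentially)
  have "nfd_dist (s m) (s n) < e" if "m \<ge> N" "n \<ge> N" for m n
  proof -
    have "nfd_dist (s m) (s n) = (\<Sum>x\<in>A. \<bar>s m x - s n x\<bar>)"
      using assms(1) supp_s supp_s by (rule nfd_dist_eq_sum_over_superset)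
    also have "\<dots> \<le> (\<Sum>x\<in>A. \<bar>s m x - \<psi> x\<bar> + \<bar>s n x - \<psi> x\<bar>)"
      by (intro sum_mono) linarith
    also have "\<dots> = err m + err n"
      by (simp add: err_def sum.distrib)
    also have "\<dots> < e"
      using N[OF that(1)] N[OF that(2)] by linarith
    finally show ?thesis .
  qed
  then show "\<exists>N\<ge>1. \<forall>m\<ge>N. \<forall>n\<ge>N. nfd_dist (s m) (s n) < e"
    by (intro exI[of _ "N + 1"]) auto
qed

theorem theorem1:
  fixes g :: "nat \<Rightarrow> real" and \<phi> :: "real \<Rightarrow> real"
  assumes "\<And>k. k \<ge> 1 \<Longrightarrow> g k \<ge> 0"
    and "Cauchy (\<lambda>n. \<Sum>k=1..n. g k)"
    and "\<phi> \<in> NFD"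
  shows "nfd_Cauchy (\<lambda>n. Gamma g n \<phi>)"
proof -
  obtain L where L: "(\<lambda>n. \<Sum>k=1..n. g k) \<longlonglongrightarrow> L"
    using assms(2) by (auto simp: Cauchy_convergent_iff convergent_def)
  have "finite (supp \<phi>)"
    using assms(3) by (simp add: NFD_def)
  moreover have "supp (Gamma g n \<phi>) \<subseteq> supp \<phi>" for n
    unfolding Gamma_eq_exp_tilt by (rule supp_exp_tilt_subset)
  moreover have "(\<lambda>n. Gamma g n \<phi> x) \<longlonglongrightarrow> exp_tilt \<phi> L x" for x
    unfolding Gamma_eq_exp_tilt using assms(3) L by (rule tendsto_exp_tilt)
  ultimately show ?thesis
    by (rule nfd_Cauchy_if_pointwise_tendsto)
qed

end
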